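(* Let $n\ge 3$ and let $L^B$ be a blow-up of $L\cong\mathbf{2}^n$ in which the atoms $q_1,\dots,q_n$ of $L$ are not replaced by longer chains (i.e. $|C_{q_i}|=1$ for all $i$). Then a vertex $x$ of $G(L^B)^{**}$ is isolated if and only if $x$ is an atom of $L^B$.
   Context: Blow-up: for $L\cong\mathbf{2}^n$ with atoms $q_1,\dots,q_n$, replace each $a\in L\setminus\{0,1\}$ by a finite chain $C_a$: $a=a^1\lessdot\cdots\lessdot a^{k_a}$ ($k_a\ge1$), keep $0,1$; elements of one chain are ordered along it, and for $u\in C_a,v\in C_b$ with $a\ne b$ ($C_0=\{0\},C_1=\{1\}$), $u\le v$ iff $a<b$ in $L$. $G(L^B)$ is the zero-divisor graph of $L^B$ (vertices: nonzero elements with a nonzero element meeting them in $0$; adjacency: meet $=0$). For $x\in L^B$, $x^\perp=\{z:x\wedge z=0\}$, $[x]=\{y: y^\perp=x^\perp\}$, and the classes are ordered by $[a]\le[b]$ iff $b^\perp\subseteq a^\perp$, with $[a]\wedge[b]=[a\wedge b]$. The graph $G(L^B)^{**}$ has the same vertex set as $G(L^B)$, and distinct vertices $x,y$ are adjacent iff either $[x]=[y]$, or $[x]\wedge[y]\neq[0]$ and $[x],[y]$ are incomparable (equivalently, $a\wedge b\ne0$, $a\not\le b$, $b\not\le a$ for all $a\in[x]$, $b\in[y]$). *)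

theory Defs
  imports Main
begin

text \<open>The Boolean lattice 2^n is modelled as the subsets of {0..<n}; its atoms are
the singletons. A blow-up is given by chain lengths k a (for a proper nonempty a);
the element a^i of the chain C_a is the pair (a, i), 1 <= i <= k a.
The bottom and top are kept: their chain has length 1.\<close>

type_synonym bel = "nat set \<times> nat"

definition chainlen :: "nat \<Rightarrow> (nat set \<Rightarrow> nat) \<Rightarrow> nat set \<Rightarrow> nat" where
  "chainlen n k a = (if a = {} \<or> a = {0..<n} then 1 else k a)"

definition carrierB :: "nat \<Rightarrow> (nat set \<Rightarrow> nat) \<Rightarrow> bel set" where
  "carrierB n k = {(a, i). a \<subseteq> {0..<n} \<and> 1 \<le> i \<and> i \<le> chainlen n k a}"

definition leB :: "bel \<Rightarrow> bel \<Rightarrow> bool" where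
  "leB u v = ((fst u = fst v \<and> snd u \<le> snd v) \<or> fst u \<subset> fst v)"

definition zeroB :: bel where
  "zeroB = ({}, 1)"

definition meetB :: "nat \<Rightarrow> (nat set \<Rightarrow> nat) \<Rightarrow> bel \<Rightarrow> bel \<Rightarrow> bel" where
  "meetB n k x y = (THE z. z \<in> carrierB n k \<and> leB z x \<and> leB z y \<and>
      (\<forall>w \<in> carrierB n k. leB w x \<and> leB w y \<longrightarrow> leB w z))"

definition perpB :: "nat \<Rightarrow> (nat set \<Rightarrow> nat) \<Rightarrow> bel \<Rightarrow> bel set" where
  "perpB n k x = {z \<in> carrierB n k. meetB n k x z = zeroB}"

definition zdverts :: "nat \<Rightarrow> (nat set \<Rightarrow> nat) \<Rightarrow> bel set" where
  "zdverts n k = {x \<in> carrierB n k. x \<noteq> zeroB \<and>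
      (\<exists>y \<in> carrierB n k. y \<noteq> zeroB \<and> meetB n k x y = zeroB)}"

text \<open>Order on classes: [a] <= [b] iff b^perp \<subseteq> a^perp; [x] \<and> [y] = [x \<and> y].\<close>
definition class_le :: "nat \<Rightarrow> (nat set \<Rightarrow> nat) \<Rightarrow> bel \<Rightarrow> bel \<Rightarrow> bool" where
  "class_le n k a b = (perpB n k b \<subseteq> perpB n k a)"

definition adjSS :: "nat \<Rightarrow> (nat set \<Rightarrow> nat) \<Rightarrow> bel \<Rightarrow> bel \<Rightarrow> bool" where
  "adjSS n k x y = (x \<in> zdverts n k \<and> y \<in> zdverts n k \<and> x \<noteq> y \<and>
     (perpB n k x = perpB n k y \<or>
      (perpB n k (meetB n k x y) \<noteq> perpB n k zeroB \<and>
       \<not> class_le n k x y \<and> \<not> class_le n k y x)))"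

definition isolatedSS :: "nat \<Rightarrow> (nat set \<Rightarrow> nat) \<Rightarrow> bel \<Rightarrow> bool" where
  "isolatedSS n k x = (x \<in> zdverts n k \<and> (\<forall>y. \<not> adjSS n k x y))"

definition atomB :: "nat \<Rightarrow> (nat set \<Rightarrow> nat) \<Rightarrow> bel \<Rightarrow> bool" where
  "atomB n k x = (x \<in> carrierB n k \<and> x \<noteq> zeroB \<and>
     (\<forall>z \<in> carrierB n k. leB z x \<longrightarrow> z = zeroB \<or> z = x))"

end

theory Submission
  imports Defs
begin

text \<open>Everything in G(L^B)** is governed by the support fst x \<in> 2^n: the meet of two
elements has the intersection of their supports as support, so x^perp, and hence the class
[x], depend only on the support. Because the atoms are not blown up, the atoms ({q}, 1)
separate supports, so [x] \<le> [y] iff supp x \<subseteq> supp y. Thus x, y are adjacent iff their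
supports are equal, or overlap without being comparable. A singleton support is comparable
with every support it meets, so atoms are isolated; a support with two points q, p that
misses some r is adjacent to the support {q, r}, which is proper because n \<ge> 3.\<close>

definition valid_blowup :: "nat \<Rightarrow> (nat set \<Rightarrow> nat) \<Rightarrow> bool" where
  "valid_blowup n k = (\<forall>a. a \<subseteq> {0..<n} \<longrightarrow> a \<noteq> {} \<longrightarrow> a \<noteq> {0..<n} \<longrightarrow> k a \<ge> 1)"

definition atoms_unblown :: "nat \<Rightarrow> (nat set \<Rightarrow> nat) \<Rightarrow> bool" where
  "atoms_unblown n k = (\<forall>q<n. k {q} = 1)"

lemma chainlen_ge_1: "valid_blowup n k \<Longrightarrow> a \<subseteq> {0..<n} \<Longrightarrow> 1 \<le> chainlen n k a"
  unfolding valid_blowup_def chainlen_def by auto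

lemma leB_antisym: "leB u v \<Longrightarrow> leB v u \<Longrightarrow> u = v"
  unfolding leB_def by (cases u; cases v) auto

lemma meetB_eqI:
  assumes "z \<in> carrierB n k" "leB z x" "leB z y"
    and "\<And>w. w \<in> carrierB n k \<Longrightarrow> leB w x \<Longrightarrow> leB w y \<Longrightarrow> leB w z"
  shows "meetB n k x y = z"
  unfolding meetB_def
proof (rule the_equality)
  fix z' assume "z' \<in> carrierB n k \<and> leB z' x \<and> leB z' y \<and>
      (\<forall>w\<in>carrierB n k. leB w x \<and> leB w y \<longrightarrow> leB w z')"
  then show "z' = z" using assms leB_antisym by blast
qed (use assms in blast)

lemma meetB_carrierB_support:
  assumes V: "valid_blowup n k" and x: "x \<in> carrierB n k" and y: "y \<in> carrierB n k"
  shows "meetB n k x y \<in> carrierB n k \<and> fst (meetB n k x y) = fst x \<inter> fst y"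
proof -
  obtain a i b j where xy: "x = (a, i)" "y = (b, j)" by (cases x, cases y)
  have bounds: "a \<subseteq> {0..<n}" "1 \<le> i" "i \<le> chainlen n k a"
    "b \<subseteq> {0..<n}" "1 \<le> j" "j \<le> chainlen n k b"
    using x y xy by (auto simp: carrierB_def)
  consider "a = b" | "a \<subset> b" | "b \<subset> a" | "a \<noteq> b" "\<not> a \<subset> b" "\<not> b \<subset> a" by blast
  then show ?thesis
  proof cases
    case 1
    have "meetB n k x y = (a, min i j)"
      by (rule meetB_eqI) (use bounds 1 in \<open>auto simp: xy carrierB_def leB_def\<close>)
    then show ?thesis using bounds 1 by (auto simp: xy carrierB_def)
  next
    case 2
    have "meetB n k x y = x"
      by (rule meetB_eqI) (use x 2 in \<open>auto simp: xy leB_def\<close>)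
    then show ?thesis using x 2 by (auto simp: xy)
  next
    case 3
    have "meetB n k x y = y"
      by (rule meetB_eqI) (use y 3 in \<open>auto simp: xy leB_def\<close>)
    then show ?thesis using y 3 by (auto simp: xy)
  next
    case 4
    have "1 \<le> chainlen n k (a \<inter> b)" using chainlen_ge_1[OF V, of "a \<inter> b"] bounds by auto
    then have "meetB n k x y = (a \<inter> b, chainlen n k (a \<inter> b))"
      by (intro meetB_eqI) (use bounds 4 in \<open>auto simp: xy carrierB_def leB_def\<close>)
    then show ?thesis using bounds \<open>1 \<le> chainlen n k (a \<inter> b)\<close> by (auto simp: xy carrierB_def)
  qed
qed

lemma carrierB_empty_support: "w \<in> carrierB n k \<Longrightarrow> fst w = {} \<Longrightarrow> w = zeroB"
  unfolding carrierB_def zeroB_def chainlen_def by auto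

lemma zeroB_in_carrierB: "zeroB \<in> carrierB n k"
  unfolding carrierB_def zeroB_def chainlen_def by auto

lemma meetB_eq_zeroB_iff:
  assumes "valid_blowup n k" "x \<in> carrierB n k" "y \<in> carrierB n k"
  shows "meetB n k x y = zeroB \<longleftrightarrow> fst x \<inter> fst y = {}"
  using meetB_carrierB_support[OF assms] carrierB_empty_support[of "meetB n k x y" n k]
  by (auto simp: zeroB_def)

lemma perpB_eq:
  assumes "valid_blowup n k" "x \<in> carrierB n k"
  shows "perpB n k x = {w \<in> carrierB n k. fst x \<inter> fst w = {}}"
  using meetB_eq_zeroB_iff[OF assms] unfolding perpB_def by auto

lemma singleton_in_carrierB: "atoms_unblown n k \<Longrightarrow> q < n \<Longrightarrow> ({q}, 1) \<in> carrierB n k"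
  unfolding atoms_unblown_def carrierB_def chainlen_def by auto

lemma carrierB_singleton_support:
  assumes "atoms_unblown n k" "x \<in> carrierB n k" "fst x = {q}"
  shows "x = ({q}, 1)"
  using assms by (cases x) (auto simp: atoms_unblown_def carrierB_def chainlen_def split: if_splits)

lemma perpB_subset_iff:
  assumes V: "valid_blowup n k" and A: "atoms_unblown n k"
    and x: "x \<in> carrierB n k" and y: "y \<in> carrierB n k"
  shows "perpB n k x \<subseteq> perpB n k y \<longleftrightarrow> fst y \<subseteq> fst x"
proof
  assume sub: "perpB n k x \<subseteq> perpB n k y"
  show "fst y \<subseteq> fst x"
  proof (rule subsetI, rule ccontr)
    fix q assume q: "q \<in> fst y" "q \<notin> fst x"
    have "q < n" using y q by (auto simp: carrierB_def)
    then have "({q}, 1) \<in> perpB n k x"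
      using perpB_eq[OF V x] singleton_in_carrierB[OF A] q by auto
    then show False using sub perpB_eq[OF V y] q by auto
  qed
qed (use perpB_eq[OF V x] perpB_eq[OF V y] in auto)

lemma perpB_eq_iff:
  assumes "valid_blowup n k" "atoms_unblown n k" "x \<in> carrierB n k" "y \<in> carrierB n k"
  shows "perpB n k x = perpB n k y \<longleftrightarrow> fst x = fst y"
  using perpB_subset_iff[OF assms] perpB_subset_iff[OF assms(1,2,4,3)] by blast

lemma class_le_iff:
  assumes "valid_blowup n k" "atoms_unblown n k" "x \<in> carrierB n k" "y \<in> carrierB n k"
  shows "class_le n k x y \<longleftrightarrow> fst x \<subseteq> fst y"
  unfolding class_le_def using perpB_subset_iff[OF assms(1,2,4,3)] .

lemma perpB_meetB_eq_perpB_zeroB_iff: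
  assumes V: "valid_blowup n k" and A: "atoms_unblown n k"
    and x: "x \<in> carrierB n k" and y: "y \<in> carrierB n k"
  shows "perpB n k (meetB n k x y) = perpB n k zeroB \<longleftrightarrow> fst x \<inter> fst y = {}"
  using perpB_eq_iff[OF V A _ zeroB_in_carrierB] meetB_carrierB_support[OF V x y]
  by (simp add: zeroB_def)

lemma zdverts_iff:
  assumes V: "valid_blowup n k"
  shows "x \<in> zdverts n k \<longleftrightarrow> x \<in> carrierB n k \<and> fst x \<noteq> {} \<and> fst x \<noteq> {0..<n}"
proof
  assume "x \<in> zdverts n k"
  then obtain y where x: "x \<in> carrierB n k" "x \<noteq> zeroB"
    and y: "y \<in> carrierB n k" "y \<noteq> zeroB" "meetB n k x y = zeroB"
    by (auto simp: zdverts_def)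
  have "fst y \<noteq> {}" "fst y \<subseteq> {0..<n}"
    using y carrierB_empty_support by (auto simp: carrierB_def)
  moreover have "fst x \<inter> fst y = {}" using meetB_eq_zeroB_iff[OF V x(1) y(1)] y(3) by simp
  ultimately have "fst x \<noteq> {0..<n}" by auto
  moreover have "fst x \<noteq> {}" using x carrierB_empty_support by blast
  ultimately show "x \<in> carrierB n k \<and> fst x \<noteq> {} \<and> fst x \<noteq> {0..<n}"
    using x by blast
next
  assume x: "x \<in> carrierB n k \<and> fst x \<noteq> {} \<and> fst x \<noteq> {0..<n}"
  define c where "c = {0..<n} - fst x"
  have "fst x \<subseteq> {0..<n}" using x by (auto simp: carrierB_def)
  then have "c \<noteq> {}" using x by (auto simp: c_def)
  have c: "(c, 1) \<in> carrierB n k"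
    using chainlen_ge_1[OF V, of c] by (auto simp: c_def carrierB_def)
  moreover have "meetB n k x (c, 1) = zeroB"
    using meetB_eq_zeroB_iff[OF V _ c] x by (auto simp: c_def)
  moreover have "(c, 1) \<noteq> zeroB" "x \<noteq> zeroB"
    using x \<open>c \<noteq> {}\<close> by (auto simp: zeroB_def)
  ultimately show "x \<in> zdverts n k"
    using x unfolding zdverts_def by blast
qed

lemma adjSS_iff:
  assumes V: "valid_blowup n k" and A: "atoms_unblown n k"
  shows "adjSS n k x y \<longleftrightarrow> x \<in> zdverts n k \<and> y \<in> zdverts n k \<and> x \<noteq> y \<and>
    (fst x = fst y \<or> (fst x \<inter> fst y \<noteq> {} \<and> \<not> fst x \<subseteq> fst y \<and> \<not> fst y \<subseteq> fst x))"
proof (cases "x \<in> zdverts n k \<and> y \<in> zdverts n k")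
  case True
  then have "x \<in> carrierB n k" "y \<in> carrierB n k" by (auto simp: zdverts_def)
  then show ?thesis
    unfolding adjSS_def
    using perpB_eq_iff[OF V A] perpB_meetB_eq_perpB_zeroB_iff[OF V A] class_le_iff[OF V A]
    by auto
qed (auto simp: adjSS_def)

lemma atomB_iff:
  assumes A: "atoms_unblown n k"
  shows "atomB n k x \<longleftrightarrow> x \<in> carrierB n k \<and> (\<exists>q. fst x = {q})"
proof
  assume at: "atomB n k x"
  then have x: "x \<in> carrierB n k" "x \<noteq> zeroB" by (auto simp: atomB_def)
  then obtain q where q: "q \<in> fst x" using carrierB_empty_support by blast
  have "q < n" using x q by (auto simp: carrierB_def)
  have "fst x = {q}"
  proof (rule ccontr)
    assume "fst x \<noteq> {q}"
    then have "leB ({q}, 1) x" using q by (auto simp: leB_def)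
    then show False
      using at singleton_in_carrierB[OF A \<open>q < n\<close>] \<open>fst x \<noteq> {q}\<close>
      by (auto simp: atomB_def zeroB_def)
  qed
  then show "x \<in> carrierB n k \<and> (\<exists>q. fst x = {q})" using x by blast
next
  assume "x \<in> carrierB n k \<and> (\<exists>q. fst x = {q})"
  then obtain q where x: "x \<in> carrierB n k" "x = ({q}, 1)"
    using carrierB_singleton_support[OF A] by blast
  have "z = zeroB \<or> z = x" if "z \<in> carrierB n k" "leB z x" for z
    using that x carrierB_empty_support[OF that(1)]
    by (cases z) (auto simp: leB_def carrierB_def subset_singleton_iff)
  then show "atomB n k x" using x by (auto simp: atomB_def zeroB_def)
qed

lemma isolatedSS_iff:
  assumes n: "n \<ge> 3" and V: "valid_blowup n k" and A: "atoms_unblown n k"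
    and x: "x \<in> zdverts n k"
  shows "isolatedSS n k x \<longleftrightarrow> (\<exists>q. fst x = {q})"
proof
  assume iso: "isolatedSS n k x"
  have xc: "x \<in> carrierB n k" "fst x \<noteq> {}" "fst x \<noteq> {0..<n}" "fst x \<subseteq> {0..<n}"
    using x zdverts_iff[OF V] by (auto simp: carrierB_def)
  show "\<exists>q. fst x = {q}"
  proof (rule ccontr)
    assume "\<nexists>q. fst x = {q}"
    then obtain q p where qp: "q \<in> fst x" "p \<in> fst x" "p \<noteq> q"
      using xc(2) by (metis all_not_in_conv insertI1 subset_singleton_iff subsetI)
    obtain r where r: "r < n" "r \<notin> fst x"
      using xc(3,4) by (metis atLeastLessThan_iff subsetI subset_antisym zero_le)
    define b where "b = {q, r}"
    have "card b \<le> 2" unfolding b_def by (simp add: card_insert_le_m1)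
    then have "b \<noteq> {0..<n}" using n by auto
    moreover have "b \<subseteq> {0..<n}" using qp xc(4) r by (auto simp: b_def)
    ultimately have "(b, 1) \<in> zdverts n k"
      using zdverts_iff[OF V] chainlen_ge_1[OF V] by (auto simp: b_def carrierB_def)
    then have "adjSS n k x (b, 1)"
      using adjSS_iff[OF V A] x qp r by (auto simp: b_def)
    then show False using iso by (auto simp: isolatedSS_def)
  qed
next
  assume "\<exists>q. fst x = {q}"
  then obtain q where q: "fst x = {q}" by blast
  have "\<not> adjSS n k x y" for y
  proof
    assume adj: "adjSS n k x y"
    then have "x \<in> carrierB n k" "y \<in> carrierB n k" "x \<noteq> y"
      by (auto simp: adjSS_def zdverts_def)
    moreover have "fst y = {q}" using adj q by (auto simp: adjSS_iff[OF V A])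
    ultimately show False using q carrierB_singleton_support[OF A] by metis
  qed
  then show "isolatedSS n k x" using x by (simp add: isolatedSS_def)
qed

theorem mainTheorem6:
  fixes n :: nat and k :: "nat set \<Rightarrow> nat"
  assumes "n \<ge> 3"
    and "\<And>a. a \<subseteq> {0..<n} \<Longrightarrow> a \<noteq> {} \<Longrightarrow> a \<noteq> {0..<n} \<Longrightarrow> k a \<ge> 1"
    and "\<And>i. i < n \<Longrightarrow> k {i} = 1"
  shows "\<forall>x \<in> zdverts n k. isolatedSS n k x \<longleftrightarrow> atomB n k x"
proof
  fix x assume x: "x \<in> zdverts n k"
  have V: "valid_blowup n k" using assms(2) by (simp add: valid_blowup_def)
  have A: "atoms_unblown n k" using assms(3) by (simp add: atoms_unblown_def)
  have "x \<in> carrierB n k" using x by (simp add: zdverts_def)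
  then show "isolatedSS n k x \<longleftrightarrow> atomB n k x"
    using isolatedSS_iff[OF assms(1) V A x] atomB_iff[OF A] by simp
qed

end
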